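(* Let $\mathcal{A}$ be a unital algebra over a field $F$ with $\operatorname{char}(F)\neq2$ such that $\mathcal{A}$ is generated (as an algebra) by its idempotents, i.e. $\mathcal{A}=R(\mathcal{A})$. Then $\operatorname{JCent}(\mathcal{A})=\operatorname{Cent}(\mathcal{A})$.
   Context: $R(\mathcal{A})$ denotes the subalgebra of $\mathcal{A}$ generated by all idempotents of $\mathcal{A}$. $x\circ y=xy+yx$. $\operatorname{JCent}(\mathcal{A})$: linear $f:\mathcal{A}\to\mathcal{A}$ with $f(x\circ y)=f(x)\circ y$ for all $x,y$. $\operatorname{Cent}(\mathcal{A})$: linear $f$ with $f(xy)=f(x)y=xf(y)$ for all $x,y$. *)

theory Defs
  imports Complex_Main
begin

definition unital_algebra :: "('f::field \<Rightarrow> 'a::ring_1 \<Rightarrow> 'a) \<Rightarrow> bool" where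
  "unital_algebra scale \<longleftrightarrow> Vector_Spaces.vector_space scale \<and>
     (\<forall>c x y. scale c (x * y) = scale c x * y \<and> scale c (x * y) = x * scale c y)"

definition idempotents :: "'a::ring_1 set" where
  "idempotents = {e. e * e = e}"

definition is_subalgebra :: "('f::field \<Rightarrow> 'a::ring_1 \<Rightarrow> 'a) \<Rightarrow> 'a set \<Rightarrow> bool" where
  "is_subalgebra scale B \<longleftrightarrow> 0 \<in> B \<and>
     (\<forall>x\<in>B. \<forall>y\<in>B. x + y \<in> B \<and> x * y \<in> B) \<and> (\<forall>c. \<forall>x\<in>B. scale c x \<in> B)"

definition R_idem :: "('f::field \<Rightarrow> 'a::ring_1 \<Rightarrow> 'a) \<Rightarrow> 'a set" where
  "R_idem scale = \<Inter>{B. is_subalgebra scale B \<and> idempotents \<subseteq> B}"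

definition jordan_prod :: "'a::ring_1 \<Rightarrow> 'a \<Rightarrow> 'a" where
  "jordan_prod x y = x * y + y * x"

definition JCent :: "('f::field \<Rightarrow> 'a::ring_1 \<Rightarrow> 'a) \<Rightarrow> ('a \<Rightarrow> 'a) set" where
  "JCent scale = {f. Vector_Spaces.linear scale scale f \<and>
     (\<forall>x y. f (jordan_prod x y) = jordan_prod (f x) y)}"

definition Cent :: "('f::field \<Rightarrow> 'a::ring_1 \<Rightarrow> 'a) \<Rightarrow> ('a \<Rightarrow> 'a) set" where
  "Cent scale = {f. Vector_Spaces.linear scale scale f \<and>
     (\<forall>x y. f (x * y) = f x * y \<and> f (x * y) = x * f y)}"

end

theory Submission
  imports Defs
begin

text \<open>Let \<open>f \<in> JCent\<close> and \<open>a = f 1\<close>. Additivity and \<open>1 \<circ> y = 2y\<close> give \<open>2 f(y) = a \<circ> y\<close>;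
 doubling \<open>f(x \<circ> y) = f(x) \<circ> y\<close> then gives \<open>a \<circ> (x \<circ> y) = (a \<circ> x) \<circ> y\<close>, which says that every
 commutator \<open>[a, y]\<close> is central. A central commutator \<open>d = [a, e]\<close> with an idempotent \<open>e\<close>
 vanishes, because \<open>e d e = 0\<close>. So \<open>a\<close> commutes with all idempotents, hence with the algebra
 they generate, which is everything. Finally \<open>2 f(y) = 2 a y\<close> and \<open>char F \<noteq> 2\<close> give
 \<open>f(y) = a y\<close> with \<open>a\<close> central, so \<open>f \<in> Cent\<close>.\<close>

lemma linear_additive:
  assumes "Vector_Spaces.linear s1 s2 f"
  shows "f (x + y) = f x + f y"
  using assms by (simp add: linear_iff_module_hom module_hom.add)

lemma R_idem_least:
  assumes "is_subalgebra scale B" and "idempotents \<subseteq> B"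
  shows "R_idem scale \<subseteq> B"
  using assms unfolding R_idem_def by blast

lemma is_subalgebra_centralizer:
  fixes scale :: "'f::field \<Rightarrow> 'a::ring_1 \<Rightarrow> 'a" and a :: 'a
  assumes "unital_algebra scale"
  shows "is_subalgebra scale {x. a * x = x * a}"
proof -
  have scale_mult: "scale c (x * y) = scale c x * y" "scale c (x * y) = x * scale c y" for c x y
    using assms unfolding unital_algebra_def by blast+
  have "a * (x * y) = (x * y) * a" if "a * x = x * a" "a * y = y * a" for x y
    by (metis that mult.assoc)
  moreover have "a * scale c x = scale c x * a" if "a * x = x * a" for c x
    by (metis that scale_mult)
  ultimately show ?thesis
    unfolding is_subalgebra_def by (simp add: distrib_left distrib_right)
qed

lemma central_if_commutes_with_idempotents:
  fixes scale :: "'f::field \<Rightarrow> 'a::ring_1 \<Rightarrow> 'a" and a x :: 'a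
  assumes "unital_algebra scale" and "R_idem scale = UNIV"
    and "\<And>e. e \<in> idempotents \<Longrightarrow> a * e = e * a"
  shows "a * x = x * a"
proof -
  have "R_idem scale \<subseteq> {x. a * x = x * a}"
    using assms(3) by (intro R_idem_least is_subalgebra_centralizer assms(1)) blast
  then show ?thesis
    using assms(2) by blast
qed

lemma commutes_with_idempotent_if_commutator_commutes:
  fixes a e :: "'a::ring"
  assumes idem: "e * e = e" and comm: "(a * e - e * a) * e = e * (a * e - e * a)"
  shows "a * e = e * a"
proof -
  define d where "d = a * e - e * a"
  have idem_left: "e * (e * x) = e * x" for x
    by (metis idem mult.assoc)
  have "d * e = e * d * e"
    using comm by (metis d_def idem mult.assoc)
  also have "\<dots> = 0"
    by (simp add: d_def algebra_simps idem idem_left)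
  finally have "d * e = 0" .
  then have "a * e = e * a * e"
    by (simp add: d_def algebra_simps idem idem_left)
  moreover from \<open>d * e = 0\<close> have "e * d = 0"
    using comm by (simp add: d_def)
  then have "e * a = e * a * e"
    by (simp add: d_def algebra_simps idem idem_left)
  ultimately show ?thesis
    by simp
qed

lemma commutator_central_if_jordan_assoc:
  fixes a x y :: "'a::ring_1"
  assumes "jordan_prod a (jordan_prod x y) = jordan_prod (jordan_prod a x) y"
  shows "(a * y - y * a) * x = x * (a * y - y * a)"
  using assms unfolding jordan_prod_def by (simp add: algebra_simps)

lemma double_eq_zero_imp_zero:
  fixes scale :: "'f::field \<Rightarrow> 'a::ab_group_add \<Rightarrow> 'a" and z :: 'a
  assumes "vector_space scale" and "(2::'f) \<noteq> 0" and "z + z = 0"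
  shows "z = 0"
proof -
  have "scale 2 z = z + z"
    using vector_space.vector_space_assms(2)[OF assms(1), of 1 1 z]
      vector_space.vector_space_assms(4)[OF assms(1), of z]
    by simp
  then show ?thesis
    using assms by (simp add: vector_space.scale_eq_0_iff)
qed

lemma JCent_double:
  assumes "f \<in> JCent scale"
  shows "f y + f y = jordan_prod (f 1) y"
proof -
  have lin: "Vector_Spaces.linear scale scale f"
    and jordan: "f (jordan_prod 1 y) = jordan_prod (f 1) y"
    using assms unfolding JCent_def by blast+
  have "f y + f y = f (jordan_prod 1 y)"
    by (simp add: jordan_prod_def linear_additive[OF lin])
  with jordan show ?thesis
    by simp
qed

lemma JCent_commutator_central:
  assumes "f \<in> JCent scale"
  shows "(f 1 * y - y * f 1) * x = x * (f 1 * y - y * f 1)"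
proof (rule commutator_central_if_jordan_assoc)
  have jordan: "f (jordan_prod x y) = jordan_prod (f x) y"
    using assms unfolding JCent_def by blast
  have "jordan_prod (f 1) (jordan_prod x y) = jordan_prod (f x) y + jordan_prod (f x) y"
    by (simp add: JCent_double[OF assms, symmetric] jordan)
  also have "\<dots> = jordan_prod (f x + f x) y"
    by (simp add: jordan_prod_def algebra_simps)
  also have "\<dots> = jordan_prod (jordan_prod (f 1) x) y"
    by (simp add: JCent_double[OF assms])
  finally show "jordan_prod (f 1) (jordan_prod x y) = jordan_prod (jordan_prod (f 1) x) y" .
qed

lemma left_mult_by_central_in_Cent:
  assumes "Vector_Spaces.linear scale scale f"
    and "\<And>y. f y = a * y" and "\<And>x. a * x = x * a"
  shows "f \<in> Cent scale"
  using assms unfolding Cent_def by (simp add: mult.assoc)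

lemma Cent_subset_JCent: "Cent scale \<subseteq> JCent scale"
proof
  fix f assume "f \<in> Cent scale"
  then have lin: "Vector_Spaces.linear scale scale f"
    and mult: "\<And>x y. f (x * y) = f x * y" "\<And>x y. f (x * y) = x * f y"
    unfolding Cent_def by blast+
  have "f (jordan_prod x y) = jordan_prod (f x) y" for x y
    using mult(1)[of x y] mult(2)[of y x] by (simp add: jordan_prod_def linear_additive[OF lin])
  with lin show "f \<in> JCent scale"
    unfolding JCent_def by blast
qed

lemma JCent_subset_Cent:
  fixes scale :: "'f::field \<Rightarrow> 'a::ring_1 \<Rightarrow> 'a"
  assumes alg: "unital_algebra scale" and two: "(2::'f) \<noteq> 0"
    and generated: "R_idem scale = UNIV"
  shows "JCent scale \<subseteq> Cent scale"
proof
  fix f assume f: "f \<in> JCent scale"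
  define a where "a = f 1"
  have "a * e = e * a" if "e \<in> idempotents" for e
    using that JCent_commutator_central[OF f] unfolding a_def idempotents_def
    by (blast intro: commutes_with_idempotent_if_commutator_commutes)
  then have central: "a * x = x * a" for x
    using central_if_commutes_with_idempotents[OF alg generated] by blast
  have vs: "vector_space scale"
    using alg unfolding unital_algebra_def by blast
  have "(f y - a * y) + (f y - a * y) = 0" for y
  proof -
    have "(f y - a * y) + (f y - a * y) = (f y + f y) - (a * y + a * y)"
      by (rule add_diff_add[symmetric])
    also have "\<dots> = 0"
      using JCent_double[OF f, of y] central[of y] by (simp add: jordan_prod_def a_def)
    finally show ?thesis .
  qed
  then have "f y - a * y = 0" for y
    by (rule double_eq_zero_imp_zero[OF vs two])
  then show "f \<in> Cent scale"
    using f central by (intro left_mult_by_central_in_Cent[of scale f a]) (auto simp: JCent_def)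
qed

theorem proposition3p6:
  fixes scale :: "'f::field \<Rightarrow> 'a::ring_1 \<Rightarrow> 'a"
  assumes "unital_algebra scale"
    and "(2::'f) \<noteq> 0"
    and "R_idem scale = UNIV"
  shows "JCent scale = Cent scale"
  using JCent_subset_Cent[OF assms] Cent_subset_JCent by (rule equalityI)

end
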